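(* Let $S:\mathbb{R}^m\times\mathbb{R}^n\to\mathbb{R}^q$ be a bilinear map with lifted linear operator $\mathscr{S}:\mathbb{R}^{m\times n}\to\mathbb{R}^q$, let $\mathcal{K}\subseteq\mathbb{R}^m\times\mathbb{R}^n$, and let $\mathcal{K}'\subseteq\mathbb{R}^{m\times n}$ be any set satisfying $\mathcal{K}'\cap\{W\in\mathbb{R}^{m\times n}:\operatorname{rank}(W)\le 1\}=\{xy^T:(x,y)\in\mathcal{K}\}$. Fix $z\in\mathbb{R}^q$ and suppose the problem (P) "find $(x,y)$ with $S(x,y)=z$ and $(x,y)\in\mathcal{K}$" is feasible, i.e. has at least one solution. Let $\mathcal{K}_{\mathrm{opt}}$ be the set of solutions of (P), and let $\mathcal{K}'_{\mathrm{opt}}$ be the set of optimal solutions (minimizers) of the problem (Q) "minimize $\operatorname{rank}(W)$ over $W\in\mathbb{R}^{m\times n}$ subject to $\mathscr{S}(W)=z$ and $W\in\mathcal{K}'$". Then: (1) Problem (Q) is feasible and its optimal solutions have rank at most one; (2) $\mathcal{K}'_{\mathrm{opt}}\subseteq\{xy^T:(x,y)\in\mathcal{K}_{\mathrm{opt}}\}$; (3) $\mathcal{K}'_{\mathrm{opt}}=\{xy^T:(x,y)\in\mathcal{K}_{\mathrm{opt}}\}$ if and only if it is not the case that $\{0\}\subsetneq\{xy^T:(x,y)\in\mathcal{K}_{\mathrm{opt}}\}$.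
   Context: A map $S:\mathbb{R}^m\times\mathbb{R}^n\to\mathbb{R}^q$ is bilinear if it is linear in each argument when the other is fixed. For $j=1,\dots,q$ let $S_j\in\mathbb{R}^{m\times n}$ be the unique matrix with $(S(x,y))_j=x^TS_jy$ for all $x,y$. The lifted linear operator $\mathscr{S}:\mathbb{R}^{m\times n}\to\mathbb{R}^q$ is defined by $(\mathscr{S}(W))_j=\langle W,S_j\rangle=\operatorname{tr}(S_j^TW)$, so that $\mathscr{S}(xy^T)=S(x,y)$ for all $x,y$. *)

theory Defs
  imports "HOL-Analysis.Analysis"
begin

definition outer :: "real^'m \<Rightarrow> real^'n \<Rightarrow> real^'n^'m" where
  "outer x y = (\<chi> i k. x $ i * y $ k)"

definition frob_inner :: "real^'n^'m \<Rightarrow> real^'n^'m \<Rightarrow> real" where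
  "frob_inner W V = (\<Sum>i\<in>UNIV. \<Sum>k\<in>UNIV. W $ i $ k * V $ i $ k)"

text \<open>The matrix S_j with (S(x,y))_j = x^T S_j y: its (i,k) entry is S(e_i,e_k)_j.\<close>
definition coeff_mat :: "(real^'m \<Rightarrow> real^'n \<Rightarrow> real^'q) \<Rightarrow> 'q \<Rightarrow> real^'n^'m" where
  "coeff_mat S j = (\<chi> i k. S (axis i 1) (axis k 1) $ j)"

definition lift :: "(real^'m \<Rightarrow> real^'n \<Rightarrow> real^'q) \<Rightarrow> real^'n^'m \<Rightarrow> real^'q" where
  "lift S W = (\<chi> j. frob_inner W (coeff_mat S j))"

end

theory Submission
  imports Defs
begin

text \<open>Lifting identifies the solutions of (P) with the feasible points of (Q) of rank at
  most one. Since a rank function vanishes only at 0, a minimiser of rank over a set that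
  contains a point of rank at most one has rank at most one itself; and the minimisers are
  exactly the points of rank at most one unless 0 is feasible (then 0 is the only minimiser)
  together with some nonzero rank-one point.\<close>

lemma lift_outer:
  fixes S :: "real^'m \<Rightarrow> real^'n \<Rightarrow> real^'q"
  assumes bil: "bilinear S"
  shows "lift S (outer x y) = S x y"
proof -
  have "S x y = S (\<Sum>i\<in>UNIV. x$i *s axis i 1) (\<Sum>k\<in>UNIV. y$k *s axis k 1)"
    by (simp add: basis_expansion)
  also have "\<dots> = (\<Sum>(i,k)\<in>UNIV \<times> UNIV. S (x$i *s axis i 1) (y$k *s axis k 1))"
    by (rule bilinear_sum[OF bil])
  also have "\<dots> = (\<Sum>(i,k)\<in>UNIV \<times> UNIV. (x$i * y$k) *\<^sub>R S (axis i 1) (axis k 1))"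
    using bilinear_lmul[OF bil] bilinear_rmul[OF bil]
    by (simp add: scalar_mult_eq_scaleR mult.commute)
  finally have expansion:
    "S x y = (\<Sum>(i,k)\<in>UNIV \<times> UNIV. (x$i * y$k) *\<^sub>R S (axis i 1) (axis k 1))" .
  show ?thesis
    unfolding expansion lift_def frob_inner_def outer_def coeff_mat_def
    by (simp add: vec_eq_iff sum_component sum.cartesian_product case_prod_beta)
qed

lemma rank_outer_le_1:
  fixes x :: "real^'m" and y :: "real^'n"
  shows "rank (outer x y) \<le> 1"
proof -
  have "range (\<lambda>v. outer x y *v v) \<subseteq> span {x}"
  proof
    fix w assume "w \<in> range (\<lambda>v. outer x y *v v)"
    then obtain v where w: "w = outer x y *v v" by blast
    have "w = (y \<bullet> v) *\<^sub>R x"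
      unfolding w by (simp add: vec_eq_iff outer_def matrix_vector_mult_def inner_vec_def
          sum_distrib_left mult_ac)
    then show "w \<in> span {x}" by (simp add: span_base span_mul)
  qed
  then have "dim (range (\<lambda>v. outer x y *v v)) \<le> dim (span {x})" by (rule dim_subset)
  also have "\<dots> \<le> 1" using dim_le_card[of "{x}" "{x}"] by (simp add: dim_span)
  finally show ?thesis by (simp add: rank_dim_range)
qed

lemma outer_image_eq_rank_le_1_solutions:
  fixes S :: "real^'m \<Rightarrow> real^'n \<Rightarrow> real^'q"
  assumes bil: "bilinear S"
    and K'_rank1: "K' \<inter> {W. rank W \<le> 1} = {outer x y | x y. (x, y) \<in> K}"
  shows "{outer x y | x y. S x y = z \<and> (x, y) \<in> K} = {W \<in> K'. lift S W = z \<and> rank W \<le> 1}"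
proof (intro set_eqI iffI)
  fix W assume "W \<in> {outer x y | x y. S x y = z \<and> (x, y) \<in> K}"
  then obtain x y where "W = outer x y" "S x y = z" "(x, y) \<in> K" by blast
  then show "W \<in> {W \<in> K'. lift S W = z \<and> rank W \<le> 1}"
    using K'_rank1 lift_outer[OF bil] rank_outer_le_1 by blast
next
  fix W assume W: "W \<in> {W \<in> K'. lift S W = z \<and> rank W \<le> 1}"
  then obtain x y where xy: "W = outer x y" "(x, y) \<in> K" using K'_rank1 by blast
  then have "S x y = z" using W lift_outer[OF bil] by simp
  then show "W \<in> {outer x y | x y. S x y = z \<and> (x, y) \<in> K}" using xy by blast
qed

lemma minimizers_subset_sublevel_1:
  fixes r :: "'a \<Rightarrow> nat"
  assumes "\<exists>W\<in>F. r W \<le> 1"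
  shows "{W \<in> F. \<forall>V\<in>F. r W \<le> r V} \<subseteq> {W \<in> F. r W \<le> 1}"
  using assms by (auto intro: order_trans)

lemma minimizers_eq_sublevel_1_iff:
  fixes r :: "'a::zero \<Rightarrow> nat"
  assumes r_eq_0: "\<And>W. r W = 0 \<longleftrightarrow> W = 0"
    and low: "\<exists>W\<in>F. r W \<le> 1"
  shows "{W \<in> F. \<forall>V\<in>F. r W \<le> r V} = {W \<in> F. r W \<le> 1}
         \<longleftrightarrow> \<not> {0} \<subset> {W \<in> F. r W \<le> 1}"
proof (cases "0 \<in> F")
  case True
  have r0: "r 0 = 0" using r_eq_0 by simp
  then have "{W \<in> F. \<forall>V\<in>F. r W \<le> r V} = {0}"
    using True r_eq_0 by fastforce
  moreover have "0 \<in> {W \<in> F. r W \<le> 1}" using True r0 by simp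
  ultimately show ?thesis by (auto simp: psubset_eq)
next
  case False
  then have "\<forall>V\<in>F. 1 \<le> r V" using r_eq_0 by (metis less_one not_less)
  then have "{W \<in> F. \<forall>V\<in>F. r W \<le> r V} = {W \<in> F. r W \<le> 1}"
    using low by (auto intro: order_trans)
  then show ?thesis using False by blast
qed

theorem theorem1:
  fixes S :: "real^'m \<Rightarrow> real^'n \<Rightarrow> real^'q"
    and K :: "((real^'m) \<times> (real^'n)) set"
    and K' :: "(real^'n^'m) set"
    and z :: "real^'q"
    and Kopt :: "((real^'m) \<times> (real^'n)) set"
    and Kopt' :: "(real^'n^'m) set"
  assumes bil: "bilinear S"
    and K'_rank1: "K' \<inter> {W. rank W \<le> 1} = {outer x y | x y. (x, y) \<in> K}"
    and feas: "\<exists>x y. S x y = z \<and> (x, y) \<in> K"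
    and Kopt_def: "Kopt = {(x, y). S x y = z \<and> (x, y) \<in> K}"
    and Kopt'_def: "Kopt' = {W. lift S W = z \<and> W \<in> K' \<and>
                     (\<forall>V. lift S V = z \<and> V \<in> K' \<longrightarrow> rank W \<le> rank V)}"
  shows "(\<exists>W. lift S W = z \<and> W \<in> K') \<and> (\<forall>W\<in>Kopt'. rank W \<le> 1)
         \<and> Kopt' \<subseteq> {outer x y | x y. (x, y) \<in> Kopt}
         \<and> (Kopt' = {outer x y | x y. (x, y) \<in> Kopt} \<longleftrightarrow>
         \<not> ({0} \<subset> {outer x y | x y. (x, y) \<in> Kopt}))"
proof -
  define F where "F = {W \<in> K'. lift S W = z}"
  have lifted_solutions: "{outer x y | x y. (x, y) \<in> Kopt} = {W \<in> F. rank W \<le> 1}"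
    using outer_image_eq_rank_le_1_solutions[OF bil K'_rank1, of z]
    unfolding Kopt_def F_def by simp
  have minimizers: "Kopt' = {W \<in> F. \<forall>V\<in>F. rank W \<le> rank V}"
    unfolding Kopt'_def F_def by blast
  have low: "\<exists>W\<in>F. rank W \<le> 1"
    using feas lifted_solutions unfolding Kopt_def by blast
  show ?thesis
    unfolding lifted_solutions minimizers
    using low minimizers_subset_sublevel_1[OF low]
      minimizers_eq_sublevel_1_iff[OF rank_eq_0 low]
    unfolding F_def by blast
qed

end
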